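(* Let $(J,D)\in\mathcal{N}(n)$ be a threshold-linear network such that $-D+J$ is a symmetric matrix of rank $1$. Then $(J,D)$ is maximally flexible in $\mathcal{N}(n)$ and has flexibility $2^n-n-1$.
   Context: A threshold-linear network $(J,D)$ on $n$ neurons: $J$ real $n\times n$, $D=\operatorname{diag}(\tau_1^{-1},\dots,\tau_n^{-1})$ with $\tau_i>0$, $-D+J$ with strictly negative diagonal, dynamics $\dot x=-Dx+[Jx+b]_+$ ($x\in\mathbb{R}^n_{\ge0}$, $b\in\mathbb{R}^n$ constant, $[y]_+=\max(y,0)$ coordinatewise); $\mathcal{N}(n)$ is the set of all such networks (every subset of $\{1,\dots,n\}$ is a clique). A non-empty $\sigma$ is a stable set if for some $b$ there is an asymptotically stable fixed point $x^*$ with $\{i:x^*_i>0\}=\sigma$; a marginal set if it is not stable but for some $b$ there is a stable fixed point with support $\sigma$; an unstable set otherwise. An $\varepsilon$-perturbation is a real $n\times n$ matrix $A$ with all $|A_{ij}|\le\varepsilon$. A maximally stable clique is a stable set not properly contained in another stable set; a minimally unstable clique is an unstable set not properly containing another unstable set. $\sigma$ is a flexible clique of $(J,D)$ if for every $\varepsilon>0$ there exist $\varepsilon$-perturbations $A_s,A_u$ such that $\sigma$ is a maximally stable clique of $(J+A_s,D)$ and a minimally unstable clique of $(J+A_u,D)$. The flexibility is the number of flexible cliques; $(J,D)$ is maximally flexible in $\mathcal{N}(n)$ if its flexibility equals the maximum flexibility over $\mathcal{N}(n)$. *)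

theory Defs
  imports "HOL-Analysis.Analysis"
begin

text \<open>Threshold-linear networks on n neurons; the neurons are indexed by a finite type 'n,
  so n = CARD('n). Matrices are real^'n^'n, vectors real^'n.\<close>

definition tln_network :: "real^'n^'n \<Rightarrow> real^'n^'n \<Rightarrow> bool" where
  "tln_network J D \<longleftrightarrow>
     (\<forall>i j. i \<noteq> j \<longrightarrow> D $ i $ j = 0) \<and> (\<forall>i. D $ i $ i > 0) \<and>
     (\<forall>i. (J - D) $ i $ i < 0)"

definition relu :: "real^'n \<Rightarrow> real^'n" where
  "relu y = (\<chi> i. max (y $ i) 0)"

definition tln_field :: "real^'n^'n \<Rightarrow> real^'n^'n \<Rightarrow> real^'n \<Rightarrow> real^'n \<Rightarrow> real^'n" where
  "tln_field J D b x = - (D *v x) + relu (J *v x + b)"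

definition nonneg_vec :: "real^'n \<Rightarrow> bool" where
  "nonneg_vec x \<longleftrightarrow> (\<forall>i. x $ i \<ge> 0)"

definition tln_solution ::
  "real^'n^'n \<Rightarrow> real^'n^'n \<Rightarrow> real^'n \<Rightarrow> real^'n \<Rightarrow> (real \<Rightarrow> real^'n) \<Rightarrow> bool" where
  "tln_solution J D b x0 x \<longleftrightarrow> x 0 = x0 \<and>
     (\<forall>t\<ge>0. (x has_vector_derivative tln_field J D b (x t)) (at t within {0..}))"

definition fixed_point :: "real^'n^'n \<Rightarrow> real^'n^'n \<Rightarrow> real^'n \<Rightarrow> real^'n \<Rightarrow> bool" where
  "fixed_point J D b xs \<longleftrightarrow> nonneg_vec xs \<and> tln_field J D b xs = 0"

definition lyapunov_stable :: "real^'n^'n \<Rightarrow> real^'n^'n \<Rightarrow> real^'n \<Rightarrow> real^'n \<Rightarrow> bool" where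
  "lyapunov_stable J D b xs \<longleftrightarrow> fixed_point J D b xs \<and>
     (\<forall>e>0. \<exists>d>0. \<forall>x0 x. nonneg_vec x0 \<and> dist x0 xs < d \<and> tln_solution J D b x0 x \<longrightarrow>
        (\<forall>t\<ge>0. dist (x t) xs < e))"

definition asymptotically_stable :: "real^'n^'n \<Rightarrow> real^'n^'n \<Rightarrow> real^'n \<Rightarrow> real^'n \<Rightarrow> bool" where
  "asymptotically_stable J D b xs \<longleftrightarrow> lyapunov_stable J D b xs \<and>
     (\<exists>d>0. \<forall>x0 x. nonneg_vec x0 \<and> dist x0 xs < d \<and> tln_solution J D b x0 x \<longrightarrow>
        (x \<longlongrightarrow> xs) at_top)"

definition supp :: "real^'n \<Rightarrow> 'n set" where
  "supp x = {i. x $ i > 0}"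

definition stable_set :: "real^'n^'n \<Rightarrow> real^'n^'n \<Rightarrow> 'n set \<Rightarrow> bool" where
  "stable_set J D \<sigma> \<longleftrightarrow> \<sigma> \<noteq> {} \<and>
     (\<exists>b xs. asymptotically_stable J D b xs \<and> supp xs = \<sigma>)"

definition marginal_set :: "real^'n^'n \<Rightarrow> real^'n^'n \<Rightarrow> 'n set \<Rightarrow> bool" where
  "marginal_set J D \<sigma> \<longleftrightarrow> \<sigma> \<noteq> {} \<and> \<not> stable_set J D \<sigma> \<and>
     (\<exists>b xs. lyapunov_stable J D b xs \<and> supp xs = \<sigma>)"

definition unstable_set :: "real^'n^'n \<Rightarrow> real^'n^'n \<Rightarrow> 'n set \<Rightarrow> bool" where
  "unstable_set J D \<sigma> \<longleftrightarrow> \<sigma> \<noteq> {} \<and> \<not> stable_set J D \<sigma> \<and> \<not> marginal_set J D \<sigma>"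

definition maximally_stable :: "real^'n^'n \<Rightarrow> real^'n^'n \<Rightarrow> 'n set \<Rightarrow> bool" where
  "maximally_stable J D \<sigma> \<longleftrightarrow> stable_set J D \<sigma> \<and> (\<forall>\<tau>. \<sigma> \<subset> \<tau> \<longrightarrow> \<not> stable_set J D \<tau>)"

definition minimally_unstable :: "real^'n^'n \<Rightarrow> real^'n^'n \<Rightarrow> 'n set \<Rightarrow> bool" where
  "minimally_unstable J D \<sigma> \<longleftrightarrow> unstable_set J D \<sigma> \<and> (\<forall>\<tau>. \<tau> \<subset> \<sigma> \<longrightarrow> \<not> unstable_set J D \<tau>)"

definition perturbation :: "real \<Rightarrow> real^'n^'n \<Rightarrow> bool" where
  "perturbation e A \<longleftrightarrow> (\<forall>i j. \<bar>A $ i $ j\<bar> \<le> e)"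

definition flexible_clique :: "real^'n^'n \<Rightarrow> real^'n^'n \<Rightarrow> 'n set \<Rightarrow> bool" where
  "flexible_clique J D \<sigma> \<longleftrightarrow>
     (\<forall>e>0. \<exists>As Au. perturbation e As \<and> perturbation e Au \<and>
        maximally_stable (J + As) D \<sigma> \<and> minimally_unstable (J + Au) D \<sigma>)"

definition flexibility :: "real^'n^'n \<Rightarrow> real^'n^'n \<Rightarrow> nat" where
  "flexibility J D = card {\<sigma>. flexible_clique J D \<sigma>}"

definition maximally_flexible :: "real^'n^'n \<Rightarrow> real^'n^'n \<Rightarrow> bool" where
  "maximally_flexible J D \<longleftrightarrow> tln_network J D \<and>
     flexibility J D = Max {flexibility J' D' | (J' :: real^'n^'n) D'. tln_network J' D'}"

end

theory Submission
  imports Defs "HOL-Real_Asymp.Real_Asymp"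
begin

text \<open>
  Write M = J - D. If M is symmetric of rank one with negative diagonal, then M = -v v^T
  for a vector v without zero entries. The proof shows that the flexible cliques are exactly
  the sets with at least two neurons; since no network can have a flexible clique of size
  at most one, this count 2^n - n - 1 is also the maximum over all networks.
\<close>

primrec picard :: "('a::banach \<Rightarrow> 'a) \<Rightarrow> 'a \<Rightarrow> nat \<Rightarrow> real \<Rightarrow> 'a" where
  "picard f x0 0 = (\<lambda>t. x0)"
| "picard f x0 (Suc k) = (\<lambda>t. x0 + integral {0..t} (\<lambda>s. f (picard f x0 k s)))"

lemma picard_continuous:
  fixes f :: "'a::banach \<Rightarrow> 'a"
  assumes f: "continuous_on UNIV f" and T: "T \<ge> 0"
  shows "continuous_on {0..T} (picard f x0 k)"
proof (induction k)
  case 0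
  then show ?case by simp
next
  case (Suc k)
  have fP: "continuous_on {0..T} (\<lambda>s. f (picard f x0 k s))"
    by (rule continuous_on_compose2[OF f Suc.IH]) auto
  have "continuous_on {0..T} (\<lambda>u. integral {0..u} (\<lambda>s. f (picard f x0 k s)))"
    unfolding continuous_on_eq_continuous_within
    using integral_has_vector_derivative[OF fP] by (meson has_vector_derivative_continuous)
  then show ?case by (simp add: continuous_on_add)
qed

lemma has_integral_monomial:
  fixes t c :: real
  assumes "t \<ge> 0"
  shows "((\<lambda>s. c * s^k) has_integral c * t^(Suc k) / Suc k) {0..t}"
proof -
  have "((\<lambda>s. c * s^k) has_integral (c * t^(Suc k) / Suc k - c * 0^(Suc k) / Suc k)) {0..t}"
  proof (rule fundamental_theorem_of_calculus)
    fix s assume "s \<in> {0..t}"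
    have "((\<lambda>s. c * s^(Suc k) / Suc k) has_real_derivative c * s^k) (at s within {0..t})"
      by (rule derivative_eq_intros refl | simp)+
    then show "((\<lambda>s. c * s^(Suc k) / Suc k) has_vector_derivative c * s^k) (at s within {0..t})"
      by (simp add: has_real_derivative_iff_has_vector_derivative)
  qed (use assms in simp)
  then show ?thesis by simp
qed

lemma picard_step_bound:
  fixes f :: "'a::banach \<Rightarrow> 'a"
  assumes lip: "L-lipschitz_on UNIV f" and t: "t \<ge> 0"
  shows "norm (picard f x0 (Suc k) t - picard f x0 k t) \<le> norm (f x0) * L^k * t^(Suc k) / fact (Suc k)"
  using t
proof (induction k arbitrary: t)
  case 0
  then show ?case by simp
next
  case (Suc k)
  have L: "L \<ge> 0" using lipschitz_on_nonneg[OF lip] .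
  have f: "continuous_on UNIV f" by (rule lipschitz_on_continuous_on[OF lip])
  have fP: "continuous_on {0..t} (\<lambda>s. f (picard f x0 j s))" for j
    by (rule continuous_on_compose2[OF f picard_continuous[OF f Suc.prems]]) auto
  define c where "c = L * norm (f x0) * L^k / fact (Suc k)"
  have "picard f x0 (Suc (Suc k)) t - picard f x0 (Suc k) t
       = integral {0..t} (\<lambda>s. f (picard f x0 (Suc k) s) - f (picard f x0 k s))"
    using integral_diff[OF integrable_continuous_real[OF fP[of "Suc k"]] integrable_continuous_real[OF fP[of k]]]
    by (simp del: picard.simps add: picard.simps(2)[of f x0 "Suc k"] picard.simps(2)[of f x0 k])
  also have "norm \<dots> \<le> integral {0..t} (\<lambda>s. c * s^(Suc k))"
  proof (rule integral_norm_bound_integral)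
    show "(\<lambda>s. f (picard f x0 (Suc k) s) - f (picard f x0 k s)) integrable_on {0..t}"
      by (intro integrable_continuous_real continuous_on_diff fP)
    show "(\<lambda>s. c * s^(Suc k)) integrable_on {0..t}"
      by (intro integrable_continuous_real continuous_intros)
    fix s assume s: "s \<in> {0..t}"
    have "norm (f (picard f x0 (Suc k) s) - f (picard f x0 k s))
          \<le> L * norm (picard f x0 (Suc k) s - picard f x0 k s)"
      by (rule lipschitz_on_normD[OF lip]) auto
    also have "\<dots> \<le> L * (norm (f x0) * L^k * s^(Suc k) / fact (Suc k))"
      using Suc.IH[of s] s L by (intro mult_left_mono) auto
    finally show "norm (f (picard f x0 (Suc k) s) - f (picard f x0 k s)) \<le> c * s^(Suc k)"
      by (simp add: c_def)
  qed
  also have "\<dots> = c * t^(Suc (Suc k)) / Suc (Suc k)"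
    by (rule integral_unique[OF has_integral_monomial[OF Suc.prems]])
  also have "\<dots> = norm (f x0) * L^(Suc k) * t^(Suc (Suc k)) / fact (Suc (Suc k))"
    by (simp add: c_def field_simps)
  finally show ?case .
qed

definition picard_limit :: "('a::banach \<Rightarrow> 'a) \<Rightarrow> 'a \<Rightarrow> real \<Rightarrow> 'a" where
  "picard_limit f x0 t = x0 + (\<Sum>i. picard f x0 (Suc i) t - picard f x0 i t)"

text \<open>By the Weierstrass M-test the iterates converge uniformly on every interval [0,T].\<close>
lemma picard_uniform_limit:
  fixes f :: "'a::banach \<Rightarrow> 'a"
  assumes lip: "L-lipschitz_on UNIV f" and T: "T \<ge> 0"
  shows "uniform_limit {0..T} (picard f x0) (picard_limit f x0) sequentially"
proof -
  have L: "L \<ge> 0" using lipschitz_on_nonneg[OF lip] .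
  define M where "M = (\<lambda>i. norm (f x0) * T * (inverse (fact i) * (L*T)^i))"
  have bound: "norm (picard f x0 (Suc i) t - picard f x0 i t) \<le> M i" if t: "t \<in> {0..T}" for i t
  proof -
    have "norm (picard f x0 (Suc i) t - picard f x0 i t) \<le> norm (f x0) * L^i * t^(Suc i) / fact (Suc i)"
      using picard_step_bound[OF lip] t by auto
    also have "\<dots> \<le> norm (f x0) * L^i * T^(Suc i) / fact (Suc i)"
      using t L by (intro divide_right_mono mult_left_mono power_mono) auto
    also have "\<dots> \<le> norm (f x0) * L^i * T^(Suc i) / fact i"
      using T L by (intro divide_left_mono mult_nonneg_nonneg zero_le_power fact_mono)
        auto
    also have "\<dots> = M i" by (simp add: M_def field_simps)
    finally show ?thesis .
  qed
  have "summable M" unfolding M_def by (intro summable_mult summable_exp)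
  from Weierstrass_m_test[OF bound this]
  have "uniform_limit {0..T} (\<lambda>n t. \<Sum>i<n. picard f x0 (Suc i) t - picard f x0 i t)
          (\<lambda>t. \<Sum>i. picard f x0 (Suc i) t - picard f x0 i t) sequentially" .
  moreover have "(\<Sum>i<n. picard f x0 (Suc i) t - picard f x0 i t) = picard f x0 n t - x0" for n t
    using sum_lessThan_telescope[of "\<lambda>i. picard f x0 i t" n] by simp
  ultimately have "uniform_limit {0..T} (\<lambda>n t. picard f x0 n t - x0) (\<lambda>t. picard_limit f x0 t - x0) sequentially"
    by (simp only: picard_limit_def add_diff_cancel_left')
  from uniform_limit_add[OF this uniform_limit_const[where c="\<lambda>t. x0"]]
  show ?thesis by simp
qed

text \<open>As a uniform limit of continuous functions, the limit is continuous.\<close>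
lemma picard_limit_continuous:
  fixes f :: "'a::banach \<Rightarrow> 'a"
  assumes lip: "L-lipschitz_on UNIV f" and T: "T \<ge> 0"
  shows "continuous_on {0..T} (picard_limit f x0)"
  using lipschitz_on_continuous_on[OF lip]
  by (intro uniform_limit_theorem[OF _ picard_uniform_limit[OF lip T]])
    (auto intro!: always_eventually picard_continuous T)

lemma picard_limit_integral_equation:
  fixes f :: "'a::banach \<Rightarrow> 'a"
  assumes lip: "L-lipschitz_on UNIV f" and t: "t \<ge> 0"
  shows "picard_limit f x0 t = x0 + integral {0..t} (\<lambda>s. f (picard_limit f x0 s))"
proof -
  have f: "continuous_on UNIV f" by (rule lipschitz_on_continuous_on[OF lip])
  have "uniform_limit {0..t} (\<lambda>n s. f (picard f x0 n s)) (f \<circ> picard_limit f x0) sequentially"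
    by (rule uniform_limit_compose[OF picard_uniform_limit[OF lip t]
          lipschitz_on_uniformly_continuous[OF lip]]) auto
  moreover have "continuous_on {0..t} (\<lambda>s. f (picard f x0 n s))" for n
    by (rule continuous_on_compose2[OF f picard_continuous[OF f t]]) auto
  ultimately obtain I J where I: "\<And>n. ((\<lambda>s. f (picard f x0 n s)) has_integral I n) {0..t}"
      and J: "((\<lambda>s. f (picard_limit f x0 s)) has_integral J) {0..t}" and IJ: "I \<longlonglongrightarrow> J"
    by (rule uniform_limit_integral) (auto simp: o_def)
  have "picard f x0 (Suc n) t = x0 + I n" for n
    using integral_unique[OF I[of n]] by simp
  then have "(\<lambda>n. picard f x0 (Suc n) t) \<longlonglongrightarrow> x0 + J"
    using tendsto_add[OF tendsto_const IJ] by simp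
  moreover have "(\<lambda>n. picard f x0 (Suc n) t) \<longlonglongrightarrow> picard_limit f x0 t"
    using LIMSEQ_Suc[OF tendsto_uniform_limitI[OF picard_uniform_limit[OF lip t]]] t by simp
  ultimately have "picard_limit f x0 t = x0 + J" using LIMSEQ_unique by blast
  then show ?thesis using integral_unique[OF J] by simp
qed

lemma lipschitz_ode_solution_exists:
  fixes f :: "'a::banach \<Rightarrow> 'a"
  assumes lip: "L-lipschitz_on UNIV f"
  shows "\<exists>x. x 0 = x0 \<and> (\<forall>t\<ge>0. (x has_vector_derivative f (x t)) (at t within {0..}))"
proof (intro exI conjI allI impI)
  let ?x = "picard_limit f x0"
  show "?x 0 = x0" using picard_limit_integral_equation[OF lip, of 0] by simp
  fix t :: real assume t: "t \<ge> 0"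
  have fx: "continuous_on {0..t+1} (\<lambda>s. f (?x s))"
    using t by (intro continuous_on_compose2[OF lipschitz_on_continuous_on[OF lip]
        picard_limit_continuous[OF lip]]) auto
  have "((\<lambda>u. x0 + integral {0..u} (\<lambda>s. f (?x s))) has_vector_derivative f (?x t)) (at t within {0..t+1})"
    using integral_has_vector_derivative[OF fx, of t] t by (auto intro!: derivative_eq_intros)
  moreover have "at t within {0..t+1} = at t within {0..}"
    by (rule at_within_nhd[where S="{t - 1 <..< t + 1}"]) auto
  ultimately have "((\<lambda>u. x0 + integral {0..u} (\<lambda>s. f (?x s))) has_vector_derivative f (?x t)) (at t within {0..})"
    by simp
  then show "(?x has_vector_derivative f (?x t)) (at t within {0..})"
    by (rule has_vector_derivative_transform_within[where d=1])
      (use t picard_limit_integral_equation[OF lip] in auto)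
qed

lemma at_within_nonneg: "(t::real) > 0 \<Longrightarrow> at t within {0..} = at t"
  by (rule at_within_open_subset[where S="{0<..}"]) auto

lemma scaled_decay_while_below:
  fixes V V' :: "real \<Rightarrow> real"
  assumes Vc: "continuous_on {0..} V"
    and Vd: "\<And>t. t \<ge> 0 \<Longrightarrow> (V has_real_derivative V' t) (at t within {0..})"
    and dec: "\<And>t. t \<ge> 0 \<Longrightarrow> V t < c \<Longrightarrow> V' t \<le> - \<gamma> * V t"
    and T: "T \<ge> 0" and below: "\<And>s. 0 \<le> s \<Longrightarrow> s < T \<Longrightarrow> V s < c"
  shows "V T * exp (\<gamma> * T) \<le> V 0"
proof -
  have "(\<lambda>s. V s * exp (\<gamma> * s)) T \<le> (\<lambda>s. V s * exp (\<gamma> * s)) 0"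
  proof (rule DERIV_nonpos_imp_decreasing_open[OF T])
    fix s assume s: "0 < s" "s < T"
    have "(V has_real_derivative V' s) (at s)"
      using Vd[of s] s at_within_nonneg[of s] by simp
    then have "((\<lambda>s. V s * exp (\<gamma> * s)) has_real_derivative (V' s + \<gamma> * V s) * exp (\<gamma> * s)) (at s)"
      by (auto intro!: derivative_eq_intros simp: algebra_simps)
    moreover have "(V' s + \<gamma> * V s) * exp (\<gamma> * s) \<le> 0"
      using dec[of s] below[of s] s by (simp add: mult_nonpos_nonneg)
    ultimately show "\<exists>y. ((\<lambda>s. V s * exp (\<gamma> * s)) has_real_derivative y) (at s) \<and> y \<le> 0"
      by blast
  next
    show "continuous_on {0..T} (\<lambda>s. V s * exp (\<gamma> * s))"
      using Vc by (intro continuous_intros) (auto elim: continuous_on_subset)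
  qed
  then show ?thesis by simp
qed

text \<open>Comparison principle: a nonnegative function with V' \<le> -\<gamma> V as long as V stays below
  the level c, starting below c, never reaches c and therefore decays exponentially.\<close>
lemma exponential_decay_comparison:
  fixes V V' :: "real \<Rightarrow> real"
  assumes Vc: "continuous_on {0..} V"
    and Vd: "\<And>t. t \<ge> 0 \<Longrightarrow> (V has_real_derivative V' t) (at t within {0..})"
    and dec: "\<And>t. t \<ge> 0 \<Longrightarrow> V t < c \<Longrightarrow> V' t \<le> - \<gamma> * V t"
    and V0: "V 0 < c" and Vnn: "\<And>t. t \<ge> 0 \<Longrightarrow> V t \<ge> 0" and g: "\<gamma> \<ge> 0"
  shows "\<forall>t\<ge>0. V t \<le> V 0 * exp (- \<gamma> * t)"
proof -
  have scaled: "V T * exp (\<gamma> * T) \<le> V 0"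
    if "T \<ge> 0" "\<And>s. 0 \<le> s \<Longrightarrow> s < T \<Longrightarrow> V s < c" for T
    using Vc Vd dec that by (rule scaled_decay_while_below)
  text \<open>At the first time t1 with V t1 \<ge> c we would get c \<le> V t1 \<le> V t1 e^{\<gamma> t1} \<le> V 0 < c.\<close>
  have below: "V t < c" if t: "t \<ge> 0" for t
  proof (rule ccontr)
    assume "\<not> V t < c"
    define S where "S = {0..t} \<inter> V -` {c..}"
    have cS: "closed S" unfolding S_def
      by (rule continuous_closed_preimage) (use Vc in \<open>auto elim: continuous_on_subset\<close>)
    have neS: "S \<noteq> {}" using t \<open>\<not> V t < c\<close> unfolding S_def by auto
    have bS: "bdd_below S" unfolding S_def by (rule bdd_belowI[of _ 0]) auto
    define t1 where "t1 = Inf S"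
    have "t1 \<in> S" unfolding t1_def by (rule closed_contains_Inf[OF neS bS cS])
    then have t1: "t1 \<ge> 0" "V t1 \<ge> c" unfolding S_def by auto
    have "V s < c" if "0 \<le> s" "s < t1" for s
    proof (rule ccontr)
      assume "\<not> V s < c"
      then have "s \<in> S" using that \<open>t1 \<in> S\<close> unfolding S_def by auto
      then show False using cInf_lower[OF _ bS] that unfolding t1_def by fastforce
    qed
    then have "V t1 * exp (\<gamma> * t1) \<le> V 0" by (rule scaled[OF t1(1)])
    moreover have "V t1 \<le> V t1 * exp (\<gamma> * t1)"
      using t1 g Vnn[of t1] by (intro mult_le_cancel_left1[THEN iffD2]) auto
    ultimately show False using t1 V0 by linarith
  qed
  show ?thesis
  proof (intro allI impI)
    fix t :: real assume t: "t \<ge> 0"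
    have "V t * exp (\<gamma> * t) \<le> V 0" by (rule scaled[OF t below]) auto
    then have "V t * exp (\<gamma> * t) * exp (- \<gamma> * t) \<le> V 0 * exp (- \<gamma> * t)"
      by (simp add: mult_right_mono)
    then show "V t \<le> V 0 * exp (- \<gamma> * t)" by (simp add: mult.assoc exp_add[symmetric])
  qed
qed

lemma exponential_growth_lower_bound:
  fixes \<phi> :: "real \<Rightarrow> real"
  assumes \<phi>d: "\<And>t. t \<ge> 0 \<Longrightarrow> (\<phi> has_real_derivative lam * \<phi> t) (at t within {0..})"
    and T: "T \<ge> 0"
  shows "\<phi> 0 * exp (lam * T) \<le> \<phi> T"
proof -
  define \<psi> where "\<psi> = (\<lambda>t. \<phi> t * exp (- lam * t))"
  have "\<psi> 0 \<le> \<psi> T"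
  proof (rule DERIV_nonneg_imp_increasing_open[OF T])
    fix t assume t: "0 < t" "t < T"
    have "(\<phi> has_real_derivative lam * \<phi> t) (at t)"
      using \<phi>d[of t] t at_within_nonneg[of t] by simp
    then have "(\<psi> has_real_derivative 0) (at t)"
      unfolding \<psi>_def by (auto intro!: derivative_eq_intros simp: algebra_simps)
    then show "\<exists>y. (\<psi> has_real_derivative y) (at t) \<and> 0 \<le> y" by blast
  next
    have "continuous_on {0..} \<phi>"
      unfolding continuous_on_eq_continuous_within using \<phi>d by (auto intro: DERIV_continuous)
    then show "continuous_on {0..T} \<psi>" unfolding \<psi>_def
      by (intro continuous_intros) (auto elim: continuous_on_subset)
  qed
  then have "\<phi> 0 * exp (lam * T) \<le> \<phi> T * exp (- lam * T) * exp (lam * T)"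
    by (simp add: \<psi>_def mult_right_mono)
  then show ?thesis by (simp add: mult.assoc exp_add[symmetric])
qed

text \<open>D is a diagonal matrix with positive diagonal; this is all that is used about D, and it is
  preserved by the perturbations of J considered below.\<close>
definition pos_diagonal :: "real^'n^'n \<Rightarrow> bool" where
  "pos_diagonal D \<longleftrightarrow> (\<forall>i j. i \<noteq> j \<longrightarrow> D$i$j = 0) \<and> (\<forall>i. D$i$i > 0)"

definition supported_on :: "'n set \<Rightarrow> real^'n \<Rightarrow> bool" where
  "supported_on \<sigma> y \<longleftrightarrow> (\<forall>i. i \<notin> \<sigma> \<longrightarrow> y$i = 0)"

lemma tln_network_iff: "tln_network J D \<longleftrightarrow> pos_diagonal D \<and> (\<forall>i. (J - D)$i$i < 0)"
  by (auto simp: tln_network_def pos_diagonal_def)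

lemma diagonal_mult:
  assumes "pos_diagonal D"
  shows "(D *v x)$i = D$i$i * x$i"
proof -
  have "(\<Sum>j\<in>UNIV. D$i$j * x$j) = (\<Sum>j\<in>UNIV. if j = i then D$i$i * x$i else 0)"
    by (rule sum.cong) (use assms in \<open>auto simp: pos_diagonal_def\<close>)
  then show ?thesis by (simp add: matrix_vector_mult_def)
qed

lemma tln_field_component:
  assumes "pos_diagonal D"
  shows "tln_field J D b x $ i = - (D$i$i * x$i) + max ((J *v x + b)$i) 0"
  by (simp add: tln_field_def relu_def diagonal_mult[OF assms])

lemma sub_diagonal_mult:
  assumes "pos_diagonal D"
  shows "((J - D) *v x)$i = (J *v x)$i - D$i$i * x$i"
  by (simp add: matrix_vector_mult_diff_rdistrib diagonal_mult[OF assms])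

lemma norm_sq_sum: "(norm (y::real^'n))^2 = (\<Sum>i\<in>UNIV. (y$i)^2)"
  unfolding power2_norm_eq_inner inner_vec_def by (simp add: power2_eq_square)

lemma inner_sum: "(x::real^'n) \<bullet> y = (\<Sum>i\<in>UNIV. x$i * y$i)"
  by (simp add: inner_vec_def)

lemma matrix_vector_norm_bound:
  fixes A :: "real^'n^'n"
  obtains K where "K \<ge> 0" "\<And>z. norm (A *v z) \<le> norm z * K"
  using bounded_linear.nonneg_bounded[OF matrix_vector_mul_bounded_linear[of A]] by blast

text \<open>The vector field of a threshold-linear network is globally Lipschitz (the rectifier is
  1-Lipschitz), so solutions exist for every initial condition.\<close>
lemma tln_field_lipschitz:
  fixes J D :: "real^'n^'n"
  shows "\<exists>L. L-lipschitz_on UNIV (tln_field J D b)"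
proof -
  obtain KD where KD: "KD \<ge> 0" "\<And>z. norm (D *v z) \<le> norm z * KD"
    using matrix_vector_norm_bound[of D] by blast
  obtain KJ where KJ: "KJ \<ge> 0" "\<And>z. norm (J *v z) \<le> norm z * KJ"
    using matrix_vector_norm_bound[of J] by blast
  have relu: "norm (relu a - relu c) \<le> norm (a - c)" for a c :: "real^'n"
    by (rule norm_le_componentwise_cart) (auto simp: relu_def)
  have "norm (tln_field J D b x - tln_field J D b y) \<le> (KD + KJ) * norm (x - y)" for x y
  proof -
    have "tln_field J D b x - tln_field J D b y
        = - (D *v (x - y)) + (relu (J *v x + b) - relu (J *v y + b))"
      by (simp add: tln_field_def algebra_simps)
    also have "norm \<dots> \<le> norm (D *v (x - y)) + norm (relu (J *v x + b) - relu (J *v y + b))"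
      by (metis norm_minus_cancel norm_triangle_ineq)
    also have "\<dots> \<le> norm (x - y) * KD + norm (J *v (x - y))"
      using KD(2)[of "x - y"] relu[of "J *v x + b" "J *v y + b"]
      by (simp add: matrix_vector_mult_diff_distrib)
    also have "\<dots> \<le> norm (x - y) * KD + norm (x - y) * KJ" using KJ(2)[of "x - y"] by simp
    finally show ?thesis by (simp add: algebra_simps)
  qed
  then show ?thesis using KD KJ by (intro exI[of _ "KD + KJ"] lipschitz_onI) (auto simp: dist_norm)
qed

lemma tln_solution_exists:
  fixes J D :: "real^'n^'n"
  shows "\<exists>x. tln_solution J D b x0 x"
  using tln_field_lipschitz lipschitz_ode_solution_exists unfolding tln_solution_def by blast

lemma fixed_point_components:
  assumes D: "pos_diagonal D" and fp: "fixed_point J D b xs"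
  shows fixed_point_active: "i \<in> supp xs \<Longrightarrow> (J *v xs + b)$i = D$i$i * xs$i"
    and fixed_point_inactive: "i \<notin> supp xs \<Longrightarrow> xs$i = 0"
    and fixed_point_inactive_input: "i \<notin> supp xs \<Longrightarrow> (J *v xs + b)$i \<le> 0"
proof -
  have nn: "xs$i \<ge> 0" and balance: "max ((J *v xs + b)$i) 0 = D$i$i * xs$i"
    using fp tln_field_component[OF D, of J b xs i]
    unfolding fixed_point_def nonneg_vec_def by (auto simp: vec_eq_iff)
  have Dp: "D$i$i > 0" using D by (simp add: pos_diagonal_def)
  show "i \<in> supp xs \<Longrightarrow> (J *v xs + b)$i = D$i$i * xs$i"
    using balance Dp by (auto simp: supp_def max_def split: if_splits)
  show "i \<notin> supp xs \<Longrightarrow> xs$i = 0" using nn by (simp add: supp_def)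
  then show "i \<notin> supp xs \<Longrightarrow> (J *v xs + b)$i \<le> 0" using balance by simp
qed

lemma field_near_fixed_point:
  assumes D: "pos_diagonal D" and fp: "fixed_point J D b xs"
  obtains r where "r > 0"
    and "\<And>x i. norm (x - xs) < r \<Longrightarrow> i \<in> supp xs \<Longrightarrow>
            tln_field J D b x $ i = ((J - D) *v (x - xs))$i"
    and "\<And>x i. norm (x - xs) < r \<Longrightarrow> (J *v xs + b)$i < 0 \<Longrightarrow>
            tln_field J D b x $ i = - (D$i$i * x$i)"
proof -
  define inp where "inp = J *v xs + b"
  define \<delta> where "\<delta> = Min (insert 1 {\<bar>inp$i\<bar> | i. inp$i \<noteq> 0})"
  have \<delta>: "\<delta> > 0" unfolding \<delta>_def by (subst Min_gr_iff) auto
  have \<delta>_le: "\<delta> \<le> \<bar>inp$i\<bar>" if "inp$i \<noteq> 0" for i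
    unfolding \<delta>_def using that by (intro Min_le) auto
  obtain KJ where KJ: "KJ \<ge> 0" "\<And>z. norm (J *v z) \<le> norm z * KJ"
    using matrix_vector_norm_bound[of J] by blast
  define r where "r = \<delta> / (KJ + 1)"
  have small: "\<bar>(J *v (x - xs))$i\<bar> < \<delta>" if "norm (x - xs) < r" for x i
  proof -
    have "\<bar>(J *v (x - xs))$i\<bar> \<le> norm (x - xs) * KJ"
      using component_le_norm_cart order_trans KJ(2) by blast
    also have "\<dots> \<le> norm (x - xs) * (KJ + 1)" by (simp add: mult_left_mono)
    also have "\<dots> < \<delta>" using that KJ by (simp add: r_def field_simps)
    finally show ?thesis .
  qed
  have inp_x: "(J *v x + b)$i = inp$i + (J *v (x - xs))$i" for x i
    by (simp add: inp_def matrix_vector_mult_diff_distrib)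
  show ?thesis
  proof (rule that)
    show "r > 0" using \<delta> KJ by (simp add: r_def)
  next
    fix x i assume x: "norm (x - xs) < r" and i: "i \<in> supp xs"
    have active: "inp$i = D$i$i * xs$i" using fixed_point_active[OF D fp i] by (simp add: inp_def)
    moreover have "D$i$i * xs$i > 0" using D i by (simp add: pos_diagonal_def supp_def)
    ultimately have "\<delta> \<le> inp$i" using \<delta>_le[of i] by (metis abs_of_pos less_irrefl)
    then have "(J *v x + b)$i > 0" using inp_x[of x i] small[OF x, of i] by linarith
    then have "tln_field J D b x $ i = - (D$i$i * x$i) + (inp$i + (J *v (x - xs))$i)"
      by (simp only: tln_field_component[OF D] inp_x max_def) simp
    then show "tln_field J D b x $ i = ((J - D) *v (x - xs))$i"
      using active by (simp add: sub_diagonal_mult[OF D] diagonal_mult[OF D] algebra_simps)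
  next
    fix x i assume x: "norm (x - xs) < r" and i: "(J *v xs + b)$i < 0"
    then have "(J *v x + b)$i < 0"
      using inp_x[of x i] small[OF x, of i] \<delta>_le[of i] by (auto simp: inp_def)
    then show "tln_field J D b x $ i = - (D$i$i * x$i)"
      by (simp add: tln_field_component[OF D])
  qed
qed

lemma nonneg_shift_within_support:
  assumes xs: "nonneg_vec xs" and k: "supported_on (supp xs) k" and d: "d > 0"
  obtains s where "s > 0" "nonneg_vec (xs + s *\<^sub>R k)" "norm (s *\<^sub>R k) < d"
proof -
  define m where "m = Min (insert d ((\<lambda>i. xs$i) ` supp xs))"
  have m: "m > 0" unfolding m_def using d by (subst Min_gr_iff) (auto simp: supp_def)
  have m_le: "m \<le> d" "\<And>i. i \<in> supp xs \<Longrightarrow> m \<le> xs$i" unfolding m_def by (auto intro: Min_le)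
  have nk: "norm k + 1 > 0" by (simp add: add_nonneg_pos)
  define s where "s = m / (norm k + 1)"
  have s: "s > 0" using m nk by (simp add: s_def)
  have sk: "s * norm k < m"
  proof -
    have "s * norm k < s * (norm k + 1)" using s by simp
    also have "\<dots> = m" unfolding s_def using nk by simp
    finally show ?thesis .
  qed
  have "(xs + s *\<^sub>R k)$i \<ge> 0" for i
  proof (cases "i \<in> supp xs")
    case True
    have "\<bar>s * k$i\<bar> \<le> s * norm k" using s component_le_norm_cart[of k i] by (simp add: abs_mult)
    then show ?thesis using m_le(2)[OF True] sk by simp
  next
    case False
    then show ?thesis using xs k by (simp add: supported_on_def nonneg_vec_def)
  qed
  moreover have "norm (s *\<^sub>R k) < d" using sk s m_le(1) by simp
  ultimately show ?thesis using that s by (auto simp: nonneg_vec_def)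
qed

definition neg_def_on :: "real^'n^'n \<Rightarrow> 'n set \<Rightarrow> real \<Rightarrow> bool" where
  "neg_def_on M \<sigma> \<mu> \<longleftrightarrow> (\<forall>y. supported_on \<sigma> y \<longrightarrow> y \<bullet> (M *v y) \<le> - \<mu> * (norm y)^2)"

definition weighted_sq :: "('n \<Rightarrow> real) \<Rightarrow> real^'n \<Rightarrow> real" where
  "weighted_sq w y = (\<Sum>i\<in>UNIV. w i * (y$i)^2)"

lemma weighted_sq_lower:
  assumes "\<And>i. 1 \<le> w i"
  shows "(norm y)^2 \<le> weighted_sq w y"
  unfolding weighted_sq_def norm_sq_sum
  using assms by (auto intro!: sum_mono mult_right_mono[of 1 "w _", simplified])

lemma weighted_sq_upper:
  assumes "\<And>i. w i \<le> K"
  shows "weighted_sq w y \<le> K * (norm y)^2"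
  unfolding weighted_sq_def norm_sq_sum sum_distrib_left
  using assms by (auto intro!: sum_mono mult_right_mono)

lemma small_quadratic_bound:
  fixes K e n :: real
  assumes K: "K \<ge> 0" and e: "e > 0" and n: "0 \<le> n" "n < e / (K + 1)"
  shows "K * n^2 < e^2"
proof -
  have Kn: "(K + 1) * n < e" using K n by (simp add: field_simps)
  have "e / (K + 1) \<le> e" using K e by (simp add: divide_le_eq)
  then have "n < e" using n by linarith
  have "K * n^2 \<le> (K + 1) * n * n" by (simp add: power2_eq_square algebra_simps)
  also have "\<dots> \<le> e * n" using Kn n by (intro mult_right_mono) auto
  also have "\<dots> < e * e" using \<open>n < e\<close> e by simp
  finally show ?thesis by (simp add: power2_eq_square)
qed

lemma quadratic_lyapunov_decay:
  assumes sol: "tln_solution J D b x0 x"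
    and w: "\<And>i. 1 \<le> w i" and \<gamma>: "\<gamma> \<ge> 0"
    and local: "\<And>x. norm (x - xs) < r \<Longrightarrow>
       (\<Sum>i\<in>UNIV. w i * (2 * (x - xs)$i * tln_field J D b x $ i)) \<le> - \<gamma> * weighted_sq w (x - xs)"
    and start: "weighted_sq w (x0 - xs) < r^2" and r: "r > 0"
  shows "\<forall>t\<ge>0. weighted_sq w (x t - xs) \<le> weighted_sq w (x0 - xs) * exp (- \<gamma> * t)"
proof -
  define V where "V = (\<lambda>t. weighted_sq w (x t - xs))"
  define V' where "V' = (\<lambda>t. \<Sum>i\<in>UNIV. w i * (2 * (x t - xs)$i * tln_field J D b (x t) $ i))"
  have xd: "\<And>t. t \<ge> 0 \<Longrightarrow> (x has_vector_derivative tln_field J D b (x t)) (at t within {0..})"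
    and x0: "x 0 = x0" using sol unfolding tln_solution_def by auto
  have Vd: "(V has_real_derivative V' t) (at t within {0..})" if t: "t \<ge> 0" for t
  proof -
    have "((\<lambda>t. x t $ i) has_real_derivative tln_field J D b (x t) $ i) (at t within {0..})" for i
      using bounded_linear.has_vector_derivative[OF bounded_linear_vec_nth xd[OF t]]
      by (simp add: has_real_derivative_iff_has_vector_derivative)
    then show ?thesis unfolding V_def V'_def weighted_sq_def
      by (auto intro!: DERIV_sum derivative_eq_intros)
  qed
  have "continuous_on {0..} V"
    unfolding continuous_on_eq_continuous_within using Vd by (auto intro: DERIV_continuous)
  moreover have "V' t \<le> - \<gamma> * V t" if "t \<ge> 0" "V t < r^2" for t
  proof -
    have "(norm (x t - xs))^2 < r^2"
      using weighted_sq_lower[of w, OF w] that(2) unfolding V_def by (meson le_less_trans)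
    then have "norm (x t - xs) < r" using r by (simp add: power_less_imp_less_base)
    then show ?thesis unfolding V_def V'_def by (rule local)
  qed
  moreover have "V t \<ge> 0" for t
    using weighted_sq_lower[of w, OF w, of "x t - xs"] unfolding V_def by (meson order_trans zero_le_power2)
  ultimately show ?thesis
    using exponential_decay_comparison[of V V' "r^2" \<gamma>] Vd start \<gamma> x0 unfolding V_def by auto
qed

lemma exp_decay_tendsto_zero: "(\<gamma>::real) > 0 \<Longrightarrow> ((\<lambda>t. c * exp (- \<gamma> * t)) \<longlongrightarrow> 0) at_top"
  by real_asymp

lemma exponential_decay_imp_asymptotically_stable:
  assumes fp: "fixed_point J D b xs" and r: "r > 0" and K: "K \<ge> 0" and \<gamma>: "\<gamma> > 0"
    and decay: "\<And>x0 x t. nonneg_vec x0 \<Longrightarrow> norm (x0 - xs) < r \<Longrightarrow> tln_solution J D b x0 x \<Longrightarrow>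
       t \<ge> 0 \<Longrightarrow> (norm (x t - xs))^2 \<le> K * (norm (x0 - xs))^2 * exp (- \<gamma> * t)"
  shows "asymptotically_stable J D b xs"
  unfolding asymptotically_stable_def lyapunov_stable_def
proof (intro conjI fp allI impI)
  fix e :: real assume e: "e > 0"
  have "dist (x t) xs < e"
    if "nonneg_vec x0" "dist x0 xs < min r (e / (K + 1))" "tln_solution J D b x0 x" "t \<ge> 0" for x0 x t
  proof -
    have "(norm (x t - xs))^2 \<le> K * (norm (x0 - xs))^2 * exp (- \<gamma> * t)"
      using decay that by (auto simp: dist_norm)
    also have "\<dots> \<le> K * (norm (x0 - xs))^2" using K \<gamma> that(4) by (simp add: mult_left_le)
    also have "\<dots> < e^2" using that(2) K e by (intro small_quadratic_bound) (auto simp: dist_norm)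
    finally show ?thesis using e by (simp add: dist_norm power_less_imp_less_base)
  qed
  then show "\<exists>d>0. \<forall>x0 x. nonneg_vec x0 \<and> dist x0 xs < d \<and> tln_solution J D b x0 x \<longrightarrow>
      (\<forall>t\<ge>0. dist (x t) xs < e)"
    using r e K by (intro exI[of _ "min r (e / (K + 1))"]) auto
next
  have "(x \<longlongrightarrow> xs) at_top"
    if x0: "nonneg_vec x0" "dist x0 xs < r" and sol: "tln_solution J D b x0 x" for x0 x
  proof (rule tendstoI)
    fix e :: real assume e: "e > 0"
    have "\<forall>\<^sub>F t in at_top. K * (norm (x0 - xs))^2 * exp (- \<gamma> * t) < e^2"
      using order_tendstoD(2)[OF exp_decay_tendsto_zero[OF \<gamma>]] e by simp
    then show "\<forall>\<^sub>F t in at_top. dist (x t) xs < e"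
      using eventually_ge_at_top[of 0]
    proof eventually_elim
      case (elim t)
      then have "(norm (x t - xs))^2 < e^2"
        using decay[OF x0(1) _ sol, of t] x0(2) by (auto simp: dist_norm)
      then show ?case using e by (simp add: dist_norm power_less_imp_less_base)
    qed
  qed
  then show "\<exists>d>0. \<forall>x0 x. nonneg_vec x0 \<and> dist x0 xs < d \<and> tln_solution J D b x0 x \<longrightarrow>
      (x \<longlongrightarrow> xs) at_top"
    using r by blast
qed

lemma two_product_le:
  fixes a c L \<mu> :: real
  assumes "\<mu> > 0"
  shows "2 * a * c * L \<le> \<mu> * a^2 + L^2 / \<mu> * c^2"
proof -
  have "2 * \<mu> * a * c * L \<le> \<mu>^2 * a^2 + L^2 * c^2"
    using zero_le_power2[of "\<mu> * a - L * c"] by (simp add: power2_eq_square algebra_simps)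
  then show ?thesis using assms by (simp add: field_simps power2_eq_square)
qed

text \<open>Key estimate for the Lyapunov function of a stable support \<sigma>: with the inactive
  coordinates weighted by a large K, the cross terms M_{\<sigma>,\<sigma>^c} are dominated by the
  negative definite block on \<sigma> and by the leak -D on \<sigma>^c.\<close>
lemma weighted_lyapunov_derivative:
  fixes M D :: "real^'n^'n" and y :: "real^'n"
  assumes nd: "neg_def_on M \<sigma> \<mu>" and \<mu>: "\<mu> > 0"
    and dmin: "dmin > 0" "\<And>i. dmin \<le> D$i$i"
    and KM: "KM \<ge> 0" "\<And>z. norm (M *v z) \<le> norm z * KM"
    and K: "K = KM^2 / (\<mu> * dmin) + 1"
  shows "(\<Sum>i\<in>UNIV. (if i \<in> \<sigma> then 1 else K) *
            (2 * y$i * (if i \<in> \<sigma> then (M *v y)$i else - (D$i$i * y$i))))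
     \<le> - min \<mu> dmin * weighted_sq (\<lambda>i. if i \<in> \<sigma> then 1 else K) y"
proof -
  define P where "P = (\<chi> i. if i \<in> \<sigma> then y$i else 0)"
  define Q where "Q = (\<chi> i. if i \<in> \<sigma> then 0 else y$i)"
  define leak where "leak = (\<Sum>i\<in>UNIV. if i \<in> \<sigma> then 0 else D$i$i * (y$i)^2)"
  have lhs: "(\<Sum>i\<in>UNIV. (if i \<in> \<sigma> then 1 else K) *
            (2 * y$i * (if i \<in> \<sigma> then (M *v y)$i else - (D$i$i * y$i))))
        = 2 * (P \<bullet> (M *v y)) - 2 * K * leak"
    unfolding inner_sum leak_def sum_distrib_left sum_subtractf[symmetric]
    by (rule sum.cong) (auto simp: P_def power2_eq_square)
  have rhs: "weighted_sq (\<lambda>i. if i \<in> \<sigma> then 1 else K) y = (norm P)^2 + K * (norm Q)^2"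
    unfolding weighted_sq_def norm_sq_sum sum_distrib_left sum.distrib[symmetric]
    by (rule sum.cong) (auto simp: P_def Q_def)
  have leak_bound: "dmin * (norm Q)^2 \<le> leak"
    unfolding norm_sq_sum leak_def sum_distrib_left
    by (rule sum_mono) (use dmin in \<open>auto simp: Q_def intro: mult_right_mono\<close>)
  have "y = P + Q" by (simp add: P_def Q_def vec_eq_iff)
  then have "P \<bullet> (M *v y) = P \<bullet> (M *v P) + P \<bullet> (M *v Q)"
    by (simp add: matrix_vector_right_distrib inner_add_right)
  moreover have "P \<bullet> (M *v P) \<le> - \<mu> * (norm P)^2"
    using nd by (simp add: neg_def_on_def supported_on_def P_def)
  moreover have "P \<bullet> (M *v Q) \<le> norm P * norm Q * KM"
    using norm_cauchy_schwarz[of P "M *v Q"] mult_left_mono[OF KM(2)[of Q], of "norm P"]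
    by (simp add: mult.assoc)
  moreover have "2 * norm P * norm Q * KM \<le> \<mu> * (norm P)^2 + KM^2 / \<mu> * (norm Q)^2"
    by (rule two_product_le[OF \<mu>])
  moreover have "KM^2 / \<mu> * (norm Q)^2 \<le> K * dmin * (norm Q)^2"
    using \<mu> dmin K by (intro mult_right_mono) (auto simp: field_simps)
  moreover have "min \<mu> dmin * (norm P)^2 \<le> \<mu> * (norm P)^2"
    by (rule mult_right_mono) auto
  moreover have "K \<ge> 1" using K \<mu> dmin by simp
  then have "min \<mu> dmin * (K * (norm Q)^2) \<le> dmin * (K * (norm Q)^2)"
    by (intro mult_right_mono) auto
  moreover have "K * (dmin * (norm Q)^2) \<le> K * leak" using leak_bound \<open>K \<ge> 1\<close> by simp
  ultimately show ?thesis unfolding lhs rhs by (simp add: algebra_simps)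
qed

lemma min_diagonal:
  assumes "pos_diagonal D"
  obtains dmin where "dmin > 0" "\<And>i. dmin \<le> D$i$i"
proof
  show "Min (range (\<lambda>i. D$i$i)) > 0" using assms by (subst Min_gr_iff) (auto simp: pos_diagonal_def)
qed auto

lemma strictly_inhibited_fixed_point:
  fixes J D :: "real^'n^'n"
  assumes D: "pos_diagonal D"
  obtains b xs r where "fixed_point J D b xs" "supp xs = \<sigma>" "r > 0"
    "\<And>x i. norm (x - xs) < r \<Longrightarrow> tln_field J D b x $ i =
        (if i \<in> \<sigma> then ((J - D) *v (x - xs))$i else - (D$i$i * (x - xs)$i))"
proof -
  define xs :: "real^'n" where "xs = (\<chi> i. if i \<in> \<sigma> then 1 else 0)"
  define b :: "real^'n" where "b = (\<chi> i. if i \<in> \<sigma> then - (((J - D) *v xs)$i) else - ((J *v xs)$i) - 1)"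
  have input: "(J *v xs + b)$i = (if i \<in> \<sigma> then D$i$i else -1)" for i
    by (simp add: b_def sub_diagonal_mult[OF D] xs_def)
  have "tln_field J D b xs $ i = 0" for i
    unfolding tln_field_component[OF D] input using D by (simp add: xs_def pos_diagonal_def)
  then have fp: "fixed_point J D b xs"
    by (auto simp: fixed_point_def nonneg_vec_def xs_def vec_eq_iff)
  have supp: "supp xs = \<sigma>" by (auto simp: supp_def xs_def)
  obtain r where r: "r > 0"
    and active: "\<And>x i. norm (x - xs) < r \<Longrightarrow> i \<in> supp xs \<Longrightarrow>
            tln_field J D b x $ i = ((J - D) *v (x - xs))$i"
    and inhibited: "\<And>x i. norm (x - xs) < r \<Longrightarrow> (J *v xs + b)$i < 0 \<Longrightarrow>
            tln_field J D b x $ i = - (D$i$i * x$i)"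
    by (rule field_near_fixed_point[OF D fp]) blast
  show ?thesis
  proof (rule that[OF fp supp r])
    fix x i assume "norm (x - xs) < r"
    then show "tln_field J D b x $ i =
        (if i \<in> \<sigma> then ((J - D) *v (x - xs))$i else - (D$i$i * (x - xs)$i))"
      using active inhibited input supp by (simp add: xs_def)
  qed
qed

text \<open>At the strictly inhibited fixed point 1_\<sigma>, a weighted quadratic
  Lyapunov function (inactive coordinates weighted by a large K) decays exponentially.\<close>
lemma stable_set_of_neg_def:
  fixes J D :: "real^'n^'n"
  assumes D: "pos_diagonal D" and ne: "\<sigma> \<noteq> {}" and \<mu>: "\<mu> > 0"
    and nd: "neg_def_on (J - D) \<sigma> \<mu>"
  shows "stable_set J D \<sigma>"
proof -
  define M where "M = J - D"
  obtain dmin where dmin: "dmin > 0" "\<And>i. dmin \<le> D$i$i" using min_diagonal[OF D] by blast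
  obtain b xs r where fp: "fixed_point J D b xs" and supp: "supp xs = \<sigma>" and r: "r > 0"
    and local_field: "\<And>x i. norm (x - xs) < r \<Longrightarrow> tln_field J D b x $ i =
        (if i \<in> \<sigma> then (M *v (x - xs))$i else - (D$i$i * (x - xs)$i))"
    unfolding M_def by (rule strictly_inhibited_fixed_point[OF D]) blast
  obtain KM where KM: "KM \<ge> 0" "\<And>z. norm (M *v z) \<le> norm z * KM"
    using matrix_vector_norm_bound[of M] by blast
  define K where "K = KM^2 / (\<mu> * dmin) + 1"
  have K: "K \<ge> 1" using \<mu> dmin by (simp add: K_def)
  define w where "w = (\<lambda>i. if i \<in> \<sigma> then 1 else K)"
  have w: "1 \<le> w i" "w i \<le> K" for i using K by (auto simp: w_def)
  define \<gamma> where "\<gamma> = min \<mu> dmin"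
  have \<gamma>: "\<gamma> > 0" using \<mu> dmin by (simp add: \<gamma>_def)
  have lyapunov: "(\<Sum>i\<in>UNIV. w i * (2 * (x - xs)$i * tln_field J D b x $ i)) \<le> - \<gamma> * weighted_sq w (x - xs)"
    if "norm (x - xs) < r" for x
    using weighted_lyapunov_derivative[OF nd[folded M_def] \<mu> dmin KM K_def, of "x - xs"]
    by (simp add: local_field[OF that] w_def \<gamma>_def)
  have "asymptotically_stable J D b xs"
  proof (rule exponential_decay_imp_asymptotically_stable[OF fp _ _ \<gamma>])
    show "r / (K + 1) > 0" "K \<ge> 0" using r K by auto
    fix x0 x and t :: real assume x0: "norm (x0 - xs) < r / (K + 1)" and sol: "tln_solution J D b x0 x"
      and t: "t \<ge> 0"
    have start: "weighted_sq w (x0 - xs) < r^2"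
      using weighted_sq_upper[of w, OF w(2)] small_quadratic_bound[of K r "norm (x0 - xs)"] x0 K r
      by (meson le_less_trans norm_ge_zero order.trans zero_le_one)
    have "(norm (x t - xs))^2 \<le> weighted_sq w (x t - xs)" by (rule weighted_sq_lower[of w, OF w(1)])
    also have "\<dots> \<le> weighted_sq w (x0 - xs) * exp (- \<gamma> * t)"
      using quadratic_lyapunov_decay[OF sol w(1) _ lyapunov start r] \<gamma> t by auto
    also have "\<dots> \<le> K * (norm (x0 - xs))^2 * exp (- \<gamma> * t)"
      by (intro mult_right_mono weighted_sq_upper[of w, OF w(2)]) auto
    finally show "(norm (x t - xs))^2 \<le> K * (norm (x0 - xs))^2 * exp (- \<gamma> * t)" .
  qed
  then show ?thesis unfolding stable_set_def using ne supp by blast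
qed

text \<open>Obstruction to stability: if J - D has a kernel vector supported on \<tau>, then every
  fixed point with support \<tau> lies on a segment of fixed points, so it cannot attract its
  neighbours.\<close>
lemma kernel_not_stable:
  fixes J D :: "real^'n^'n"
  assumes D: "pos_diagonal D"
    and k: "k \<noteq> 0" "supported_on \<tau> k" "(J - D) *v k = 0"
  shows "\<not> stable_set J D \<tau>"
proof
  assume "stable_set J D \<tau>"
  then obtain b xs where as: "asymptotically_stable J D b xs" and supp: "supp xs = \<tau>"
    unfolding stable_set_def by blast
  then have fp: "fixed_point J D b xs"
    unfolding asymptotically_stable_def lyapunov_stable_def by blast
  obtain d where d: "d > 0" and attract: "\<And>x0 x. nonneg_vec x0 \<Longrightarrow> dist x0 xs < d \<Longrightarrow>
      tln_solution J D b x0 x \<Longrightarrow> (x \<longlongrightarrow> xs) at_top"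
    using as unfolding asymptotically_stable_def by blast
  obtain s where s: "s > 0" and nn: "nonneg_vec (xs + s *\<^sub>R k)" and close: "norm (s *\<^sub>R k) < d"
    using nonneg_shift_within_support[of xs k d] fp k(2) d supp
    unfolding fixed_point_def by blast
  define x1 where "x1 = xs + s *\<^sub>R k"
  have Jk: "(J *v k)$i = D$i$i * k$i" for i
    using arg_cong[OF k(3), of "\<lambda>z. z$i"] by (simp add: sub_diagonal_mult[OF D])
  have input: "(J *v x1 + b)$i = (J *v xs + b)$i + s * (D$i$i * k$i)" for i
    using Jk[of i] by (simp add: x1_def matrix_vector_right_distrib matrix_vector_mult_scaleR)
  have "tln_field J D b x1 $ i = 0 $ i" for i
  proof (cases "i \<in> supp xs")
    case True
    then have "(J *v x1 + b)$i = D$i$i * x1$i"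
      unfolding input fixed_point_active[OF D fp True] by (simp add: x1_def algebra_simps)
    moreover have "D$i$i * x1$i \<ge> 0"
      using nn D by (simp add: x1_def nonneg_vec_def pos_diagonal_def less_imp_le)
    ultimately show ?thesis by (simp add: tln_field_component[OF D])
  next
    case False
    then have "k$i = 0" using k(2) supp by (auto simp: supported_on_def)
    then show ?thesis
      using input[of i] fixed_point_inactive[OF D fp False] fixed_point_inactive_input[OF D fp False]
      by (simp add: tln_field_component[OF D] x1_def)
  qed
  then have "tln_field J D b x1 = 0" by (simp add: vec_eq_iff)
  then have "tln_solution J D b x1 (\<lambda>t. x1)"
    unfolding tln_solution_def by (auto intro: has_vector_derivative_const)
  moreover have "dist x1 xs < d" using close by (simp add: x1_def dist_norm)
  ultimately have "((\<lambda>t::real. x1) \<longlongrightarrow> xs) at_top"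
    using attract nn unfolding x1_def by blast
  then have "x1 = xs" using tendsto_const_iff[of "at_top :: real filter" x1 xs] by simp
  then show False using s k(1) by (simp add: x1_def)
qed

text \<open>Obstruction to Lyapunov stability: a left eigenvector u of J - D with positive
  eigenvalue, supported on \<sigma>, makes u \<bullet> (x - x*) grow exponentially near every fixed point
  x* with support \<sigma>, so trajectories escape every small ball.\<close>
lemma left_eigenvector_not_lyapunov_stable:
  fixes J D :: "real^'n^'n"
  assumes D: "pos_diagonal D"
    and u: "u \<noteq> 0" "supported_on \<sigma> u" "\<And>y. u \<bullet> ((J - D) *v y) = lam * (u \<bullet> y)"
    and lam: "lam > 0" and supp: "supp xs = \<sigma>"
  shows "\<not> lyapunov_stable J D b xs"
proof
  assume ly: "lyapunov_stable J D b xs"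
  then have fp: "fixed_point J D b xs" unfolding lyapunov_stable_def by blast
  obtain r where r: "r > 0"
    and active: "\<And>x i. norm (x - xs) < r \<Longrightarrow> i \<in> supp xs \<Longrightarrow>
            tln_field J D b x $ i = ((J - D) *v (x - xs))$i"
    by (rule field_near_fixed_point[OF D fp]) blast
  have growth_rate: "u \<bullet> tln_field J D b x = lam * (u \<bullet> (x - xs))" if x: "norm (x - xs) < r" for x
  proof -
    have "u \<bullet> tln_field J D b x = u \<bullet> ((J - D) *v (x - xs))"
      unfolding inner_sum using u(2) active[OF x] supp by (intro sum.cong) (auto simp: supported_on_def)
    then show ?thesis using u(3) by simp
  qed
  obtain d where d: "d > 0" and stay: "\<And>x0 x t. nonneg_vec x0 \<Longrightarrow> dist x0 xs < d \<Longrightarrow>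
      tln_solution J D b x0 x \<Longrightarrow> t \<ge> 0 \<Longrightarrow> dist (x t) xs < r"
    using ly r unfolding lyapunov_stable_def by meson
  obtain s where s: "s > 0" and nn: "nonneg_vec (xs + s *\<^sub>R u)" and close: "norm (s *\<^sub>R u) < d"
    using nonneg_shift_within_support[of xs u d] fp u(2) d supp
    unfolding fixed_point_def by blast
  define x0 where "x0 = xs + s *\<^sub>R u"
  obtain x where sol: "tln_solution J D b x0 x" using tln_solution_exists by blast
  have inball: "norm (x t - xs) < r" if "t \<ge> 0" for t
    using stay[OF nn _ sol[unfolded x0_def] that] close by (simp add: dist_norm)
  define \<phi> where "\<phi> = (\<lambda>t. u \<bullet> (x t - xs))"
  have \<phi>d: "(\<phi> has_real_derivative lam * \<phi> t) (at t within {0..})" if t: "t \<ge> 0" for t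
  proof -
    have "((\<lambda>t. x t - xs) has_vector_derivative tln_field J D b (x t)) (at t within {0..})"
      using sol t unfolding tln_solution_def by (auto intro!: derivative_eq_intros)
    from bounded_linear.has_vector_derivative[OF bounded_linear_inner_right[of u] this]
    show ?thesis unfolding \<phi>_def using growth_rate[OF inball[OF t]]
      by (simp add: has_real_derivative_iff_has_vector_derivative)
  qed
  have \<phi>0: "\<phi> 0 = s * (norm u)^2"
    using sol unfolding \<phi>_def tln_solution_def x0_def by (simp add: power2_norm_eq_inner)
  then have \<phi>0_pos: "\<phi> 0 > 0" using s u(1) by simp
  text \<open>After time T the component along u would exceed the radius of the ball.\<close>
  define T where "T = (norm u * r / \<phi> 0) / lam"
  have T: "T \<ge> 0" using \<phi>0_pos lam r unfolding T_def by simp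
  have "\<phi> 0 + norm u * r = \<phi> 0 * (1 + lam * T)" using \<phi>0_pos lam unfolding T_def by (simp add: field_simps)
  also have "\<dots> \<le> \<phi> 0 * exp (lam * T)"
    using \<phi>0_pos lam T by (intro mult_left_mono exp_ge_add_one_self_aux) auto
  also have "\<dots> \<le> \<phi> T" by (rule exponential_growth_lower_bound[OF \<phi>d T])
  also have "\<dots> \<le> norm u * norm (x T - xs)" unfolding \<phi>_def by (rule norm_cauchy_schwarz)
  also have "\<dots> \<le> norm u * r" using inball[OF T] by (intro mult_left_mono) auto
  finally show False using \<phi>0_pos by linarith
qed

lemma unstable_setI:
  assumes "\<sigma> \<noteq> {}" and "\<And>b xs. supp xs = \<sigma> \<Longrightarrow> \<not> lyapunov_stable J D b xs"
  shows "unstable_set J D \<sigma>"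
  using assms unfolding unstable_set_def marginal_set_def stable_set_def asymptotically_stable_def
  by blast

lemma symmetric_rank_one_neg_diagonal:
  fixes M :: "real^'n^'n"
  assumes sym: "transpose M = M" and rk: "rank M = 1" and neg: "\<And>i. M$i$i < 0"
  obtains v where "\<And>i. v$i \<noteq> 0" and "\<And>y. M *v y = - (v \<bullet> y) *\<^sub>R v"
proof -
  have "dim (range (\<lambda>x. M *v x)) = 1" using rk by (simp add: rank_dim_range)
  then obtain B where B: "range (\<lambda>x. M *v x) \<subseteq> span B" "card B = 1"
    by (metis basis_exists)
  then obtain c where "B = {c}" using card_1_singletonE by blast
  then have "\<exists>a. M *v axis j 1 = a *\<^sub>R c" for j
    using B(1) by (auto simp: span_singleton)
  then obtain a where a: "\<And>j. M *v axis j 1 = a j *\<^sub>R c" by metis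
  text \<open>Column j of M is a_j c; symmetry forces a to be proportional to c.\<close>
  have Mac: "M$i$j = a j * c$i" for i j
    using arg_cong[OF a[of j], of "\<lambda>z. z$i"] by (simp add: matrix_vector_mult_basis column_def)
  have symm: "M$i$j = M$j$i" for i j using arg_cong[OF sym, of "\<lambda>A. A$i$j"] by (simp add: transpose_def)
  fix i0 :: 'n
  define \<kappa> where "\<kappa> = a i0 / c$i0"
  have c: "c$i \<noteq> 0" for i using neg[of i] Mac[of i i] by auto
  have ak: "a j = \<kappa> * c$j" for j
  proof -
    have "a j * c$i0 = a i0 * c$j" using symm[of i0 j] Mac[of i0 j] Mac[of j i0] by (simp add: mult.commute)
    then show ?thesis unfolding \<kappa>_def using c[of i0] by (simp add: field_simps)
  qed
  have "\<kappa> * (c$i0)^2 < 0" using neg[of i0] Mac[of i0 i0] ak[of i0] by (simp add: power2_eq_square mult.assoc)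
  then have \<kappa>: "\<kappa> < 0" using c[of i0] by (simp add: mult_less_0_iff)
  define v where "v = sqrt (- \<kappa>) *\<^sub>R c"
  have Mv: "M$i$j = - (v$i * v$j)" for i j
  proof -
    have "sqrt (-\<kappa>) * sqrt (-\<kappa>) = -\<kappa>" using \<kappa> by simp
    then show ?thesis using Mac[of i j] ak[of j] unfolding v_def by (simp add: algebra_simps)
  qed
  show ?thesis
  proof (rule that)
    show "v$i \<noteq> 0" for i using c \<kappa> by (simp add: v_def)
    show "M *v y = - (v \<bullet> y) *\<^sub>R v" for y
      unfolding vec_eq_iff
      by (simp add: matrix_vector_mult_def Mv inner_sum sum_distrib_left sum_distrib_right sum_negf)
        (auto intro: sum.cong simp: algebra_simps)
  qed
qed

definition restrict_to :: "'n set \<Rightarrow> real^'n \<Rightarrow> real^'n" where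
  "restrict_to S y = (\<chi> i. if i \<in> S then y$i else 0)"

lemma supported_on_restrict_to: "supported_on S y \<Longrightarrow> restrict_to S y = y"
  by (auto simp: supported_on_def restrict_to_def vec_eq_iff)

lemma inner_sq_le_without_coordinate:
  fixes u y :: "real^'n"
  assumes "supported_on \<rho> y" and "i0 \<notin> \<rho>"
  shows "(u \<bullet> y)^2 \<le> ((norm u)^2 - (u$i0)^2) * (norm y)^2"
proof -
  define u' where "u' = (\<chi> i. if i = i0 then 0 else u$i)"
  have "u \<bullet> y = u' \<bullet> y"
    unfolding inner_sum by (rule sum.cong) (use assms in \<open>auto simp: u'_def supported_on_def\<close>)
  moreover have "(norm u')^2 = (norm u)^2 - (u$i0)^2"
  proof -
    have "(\<Sum>i\<in>UNIV. (u$i)^2) = (\<Sum>i\<in>UNIV. (u'$i)^2 + (if i = i0 then (u$i0)^2 else 0))"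
      by (rule sum.cong) (auto simp: u'_def)
    then show ?thesis by (simp add: norm_sq_sum sum.distrib)
  qed
  moreover have "(u' \<bullet> y)^2 \<le> (norm u')^2 * (norm y)^2"
    using power_mono[OF Cauchy_Schwarz_ineq2[of u' y] abs_ge_zero, of 2]
    by (simp add: power_mult_distrib)
  ultimately show ?thesis by simp
qed

definition diagonal_damping :: "real \<Rightarrow> 'n set \<Rightarrow> real^'n^'n" where
  "diagonal_damping e S = (\<chi> i j. if i = j \<and> i \<in> S then - e else 0)"

lemma diagonal_damping_mult: "(diagonal_damping e S *v y)$i = (if i \<in> S then - e * y$i else 0)"
proof -
  have "(\<Sum>j\<in>UNIV. diagonal_damping e S $i$j * y$j) = (\<Sum>j\<in>UNIV. if j = i then diagonal_damping e S $i$i * y$i else 0)"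
    by (rule sum.cong) (auto simp: diagonal_damping_def)
  then show ?thesis by (simp add: matrix_vector_mult_def diagonal_damping_def)
qed

lemma diagonal_damping_perturbation: "e \<ge> 0 \<Longrightarrow> perturbation e (diagonal_damping e S)"
  by (simp add: perturbation_def diagonal_damping_def)

text \<open>Damping every neuron of \<sigma> except one makes the rank-one matrix -v v^T negative
  definite on \<sigma>: the undamped direction e_{i1} is controlled by v_{i1}^2 > 0.\<close>
lemma rank_one_damped_neg_def:
  fixes M :: "real^'n^'n"
  assumes Mv: "\<And>y. M *v y = - (v \<bullet> y) *\<^sub>R v" and v1: "v$i1 \<noteq> 0" and e: "e > 0"
  shows "\<exists>\<mu>>0. neg_def_on (M + diagonal_damping e (\<sigma> - {i1})) \<sigma> \<mu>"
proof -
  define V where "V = (norm v)^2"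
  define \<mu> where "\<mu> = min ((v$i1)^2 / 2) (e / (2 * V / (v$i1)^2 + 1))"
  have V: "V \<ge> 0" and v1sq: "(v$i1)^2 > 0" using v1 by (auto simp: V_def)
  have den: "2 * V / (v$i1)^2 + 1 > 0" using V v1sq by (simp add: add_nonneg_pos)
  have \<mu>: "\<mu> > 0" using e den v1sq by (simp add: \<mu>_def)
  have "y \<bullet> ((M + diagonal_damping e (\<sigma> - {i1})) *v y) \<le> - \<mu> * (norm y)^2"
    if y: "supported_on \<sigma> y" for y
  proof -
    define z where "z = restrict_to (- {i1}) y"
    have y_split: "y = z + y$i1 *\<^sub>R axis i1 1"
      by (auto simp: z_def restrict_to_def vec_eq_iff axis_def)
    have norm_split: "(norm y)^2 = (norm z)^2 + (y$i1)^2"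
    proof -
      have "(\<Sum>i\<in>UNIV. (y$i)^2) = (\<Sum>i\<in>UNIV. (z$i)^2 + (if i = i1 then (y$i1)^2 else 0))"
        by (rule sum.cong) (auto simp: z_def restrict_to_def)
      then show ?thesis by (simp add: norm_sq_sum sum.distrib)
    qed
    have damping: "y \<bullet> (diagonal_damping e (\<sigma> - {i1}) *v y) = - e * (norm z)^2"
      unfolding inner_sum norm_sq_sum sum_distrib_left
      by (rule sum.cong) (use y in \<open>auto simp: diagonal_damping_mult z_def restrict_to_def
          supported_on_def power2_eq_square\<close>)
    have quad: "y \<bullet> ((M + diagonal_damping e (\<sigma> - {i1})) *v y) = - ((v \<bullet> y)^2) - e * (norm z)^2"
      by (simp only: matrix_vector_mult_add_rdistrib inner_add_right Mv damping)
        (simp add: power2_eq_square inner_commute)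
    text \<open>The e_{i1}-component is recovered from v \<bullet> y and the rest z.\<close>
    have "(v$i1)^2 * (y$i1)^2 = (v \<bullet> y - v \<bullet> z)^2"
      by (subst (2) y_split) (simp add: inner_add_right inner_axis power_mult_distrib)
    also have "\<dots> \<le> 2 * (v \<bullet> y)^2 + 2 * (v \<bullet> z)^2"
      using zero_le_power2[of "v \<bullet> y + v \<bullet> z"] by (simp add: power2_eq_square algebra_simps)
    also have "\<dots> \<le> 2 * (v \<bullet> y)^2 + 2 * V * (norm z)^2"
      using power_mono[OF Cauchy_Schwarz_ineq2[of v z] abs_ge_zero, of 2]
      by (simp add: V_def power_mult_distrib)
    finally have comp: "(y$i1)^2 \<le> (2 * (v \<bullet> y)^2 + 2 * V * (norm z)^2) / (v$i1)^2"
      using v1sq by (simp add: field_simps)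
    have "\<mu> * (y$i1)^2 \<le> \<mu> * ((2 * (v \<bullet> y)^2 + 2 * V * (norm z)^2) / (v$i1)^2)"
      using comp \<mu> by (intro mult_left_mono) auto
    also have "\<dots> = (2 * \<mu> / (v$i1)^2) * (v \<bullet> y)^2 + (\<mu> * (2 * V / (v$i1)^2 + 1) - \<mu>) * (norm z)^2"
      using v1sq by (simp add: field_simps)
    also have "\<dots> \<le> 1 * (v \<bullet> y)^2 + (e - \<mu>) * (norm z)^2"
    proof (rule add_mono; rule mult_right_mono)
      show "2 * \<mu> / (v$i1)^2 \<le> 1" using v1sq by (simp add: \<mu>_def field_simps)
      show "\<mu> * (2 * V / (v$i1)^2 + 1) - \<mu> \<le> e - \<mu>"
        using den by (simp add: \<mu>_def pos_le_divide_eq[symmetric])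
    qed auto
    finally show ?thesis unfolding quad norm_split by (simp add: algebra_simps)
  qed
  then show ?thesis using \<mu> by (auto simp: neg_def_on_def)
qed

text \<open>For j outside \<sigma>, the vector v_j e_{i1} - v_{i1} e_j is orthogonal to v and undamped,
  hence a kernel vector of the damped matrix supported on any \<tau> \<supseteq> {i1, j}.\<close>
lemma rank_one_damped_kernel:
  fixes M :: "real^'n^'n"
  assumes Mv: "\<And>y. M *v y = - (v \<bullet> y) *\<^sub>R v" and v: "\<And>i. v$i \<noteq> 0"
    and i1: "i1 \<in> \<sigma>" and j: "j \<notin> \<sigma>"
  obtains k where "k \<noteq> 0" "supported_on {i1, j} k"
    "(M + diagonal_damping e (\<sigma> - {i1})) *v k = 0"
proof
  define k :: "real^'n" where "k = (\<chi> i. if i = i1 then v$j else if i = j then - v$i1 else 0)"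
  have ji: "j \<noteq> i1" using i1 j by auto
  have "v \<bullet> k = (\<Sum>i\<in>UNIV. (if i = i1 then v$i1 * v$j else 0) + (if i = j then - (v$j * v$i1) else 0))"
    unfolding inner_sum by (rule sum.cong) (use ji in \<open>auto simp: k_def\<close>)
  then have "v \<bullet> k = 0" by (simp add: sum.distrib)
  then show "(M + diagonal_damping e (\<sigma> - {i1})) *v k = 0"
    using ji j by (auto simp: matrix_vector_mult_add_rdistrib Mv vec_eq_iff diagonal_damping_mult k_def)
  show "k \<noteq> 0" using ji v[of i1] by (auto simp: k_def vec_eq_iff)
  show "supported_on {i1, j} k" by (auto simp: supported_on_def k_def)
qed

text \<open>Stable half of flexibility: damping \<sigma> \<setminus> {i1} by e makes \<sigma> stable, while every proper
  superset acquires a kernel vector and so is not stable.\<close>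
lemma maximally_stable_perturbation:
  fixes J D :: "real^'n^'n"
  assumes D: "pos_diagonal D" and v: "\<And>i. v$i \<noteq> 0" and Mv: "\<And>y. (J - D) *v y = - (v \<bullet> y) *\<^sub>R v"
    and i1: "i1 \<in> \<sigma>" and e: "e > 0"
  shows "maximally_stable (J + diagonal_damping e (\<sigma> - {i1})) D \<sigma>"
proof -
  let ?A = "diagonal_damping e (\<sigma> - {i1}) :: real^'n^'n"
  have shift: "J + ?A - D = (J - D) + ?A" by (simp add: algebra_simps)
  obtain \<mu> where "\<mu> > 0" "neg_def_on ((J - D) + ?A) \<sigma> \<mu>"
    using rank_one_damped_neg_def[OF Mv v e] by blast
  then have "neg_def_on (J + ?A - D) \<sigma> \<mu>" by (simp only: shift)
  then have "stable_set (J + ?A) D \<sigma>"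
    using stable_set_of_neg_def[OF D _ \<open>\<mu> > 0\<close>] i1 by blast
  moreover have "\<not> stable_set (J + ?A) D \<tau>" if sub: "\<sigma> \<subset> \<tau>" for \<tau>
  proof -
    obtain j where j: "j \<in> \<tau>" "j \<notin> \<sigma>" using psubset_imp_ex_mem[OF sub] by blast
    obtain k where k: "k \<noteq> 0" "supported_on {i1, j} k" "((J - D) + ?A) *v k = 0"
      using rank_one_damped_kernel[OF Mv v i1 j(2)] by blast
    have "supported_on \<tau> k" using k(2) i1 j sub by (auto simp: supported_on_def)
    moreover have "(J + ?A - D) *v k = 0" using k(3) by (simp only: shift)
    ultimately show ?thesis by (rule kernel_not_stable[OF D k(1)])
  qed
  ultimately show ?thesis unfolding maximally_stable_def by blast
qed

lemma orthogonal_full_support_vector: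
  fixes v :: "real^'n"
  assumes v: "\<And>i. v$i \<noteq> 0" and two: "card \<sigma> \<ge> 2"
  obtains u where "supported_on \<sigma> u" "\<And>i. i \<in> \<sigma> \<Longrightarrow> u$i \<noteq> 0" "u \<bullet> v = 0"
proof -
  obtain i1 where i1: "i1 \<in> \<sigma>" using two by fastforce
  define c where "c = real (card \<sigma>) - 1"
  have c: "c \<noteq> 0" using two by (simp add: c_def)
  define u :: "real^'n" where "u = (\<chi> i. if i \<in> \<sigma> then (if i = i1 then - c / v$i1 else 1 / v$i) else 0)"
  have "u \<bullet> v = (\<Sum>i\<in>UNIV. if i \<in> \<sigma> then (if i = i1 then - c else 1) else 0)"
    unfolding inner_sum by (rule sum.cong) (use v in \<open>auto simp: u_def\<close>)
  also have "\<dots> = (\<Sum>i\<in>\<sigma>. if i = i1 then - c else 1)" by (simp add: sum.If_cases)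
  also have "\<dots> = - c + real (card (\<sigma> - {i1}))" using i1 by (simp add: sum.remove)
  also have "\<dots> = 0" using i1 two by (simp add: c_def card_Diff_singleton)
  finally have "u \<bullet> v = 0" .
  moreover have "u$i \<noteq> 0" if "i \<in> \<sigma>" for i using that v c by (simp add: u_def)
  moreover have "supported_on \<sigma> u" by (simp add: supported_on_def u_def)
  ultimately show ?thesis using that by blast
qed

definition destabilizer :: "real \<Rightarrow> real \<Rightarrow> real^'n \<Rightarrow> 'n set \<Rightarrow> real^'n^'n" where
  "destabilizer \<eta> \<kappa> u \<sigma> = (\<chi> i j. \<eta> * (u$i * u$j - (if i = j \<and> i \<in> \<sigma> then \<kappa> else 0)))"

lemma destabilizer_mult:
  "destabilizer \<eta> \<kappa> u \<sigma> *v y = \<eta> *\<^sub>R ((u \<bullet> y) *\<^sub>R u - \<kappa> *\<^sub>R restrict_to \<sigma> y)"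
proof (subst vec_eq_iff, intro allI)
  fix i
  have "(destabilizer \<eta> \<kappa> u \<sigma> *v y)$i = (\<Sum>j\<in>UNIV. \<eta> * u$i * (u$j * y$j)
          - (if j = i then \<eta> * (if i \<in> \<sigma> then \<kappa> else 0) * y$i else 0))"
    unfolding matrix_vector_mult_def by (auto simp: destabilizer_def intro!: sum.cong simp: algebra_simps)
  also have "\<dots> = \<eta> * u$i * (u \<bullet> y) - \<eta> * (if i \<in> \<sigma> then \<kappa> else 0) * y$i"
    by (simp add: sum_subtractf inner_sum sum_distrib_left)
  finally show "(destabilizer \<eta> \<kappa> u \<sigma> *v y)$i = (\<eta> *\<^sub>R ((u \<bullet> y) *\<^sub>R u - \<kappa> *\<^sub>R restrict_to \<sigma> y))$i"
    by (cases "i \<in> \<sigma>") (simp_all add: restrict_to_def algebra_simps)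
qed

lemma destabilizer_perturbation:
  assumes "\<eta> \<ge> 0" and "0 \<le> \<kappa>" "\<kappa> \<le> (norm u)^2"
  shows "perturbation (2 * \<eta> * (norm u)^2) (destabilizer \<eta> \<kappa> u \<sigma>)"
  unfolding perturbation_def
proof (intro allI)
  fix i j
  have "\<bar>u$i * u$j\<bar> \<le> (norm u)^2"
    using mult_mono[OF component_le_norm_cart component_le_norm_cart]
    by (simp add: power2_eq_square abs_mult)
  then have "\<bar>u$i * u$j - (if i = j \<and> i \<in> \<sigma> then \<kappa> else 0)\<bar> \<le> 2 * (norm u)^2"
    using assms(2,3) by (auto simp: abs_le_iff)
  then have "\<eta> * \<bar>u$i * u$j - (if i = j \<and> i \<in> \<sigma> then \<kappa> else 0)\<bar> \<le> \<eta> * (2 * (norm u)^2)"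
    using assms(1) by (rule mult_left_mono)
  then show "\<bar>destabilizer \<eta> \<kappa> u \<sigma> $i$j\<bar> \<le> 2 * \<eta> * (norm u)^2"
    using assms(1) by (simp add: destabilizer_def abs_mult)
qed

lemma destabilizer_left_eigenvector:
  fixes M :: "real^'n^'n"
  assumes Mv: "\<And>y. M *v y = - (v \<bullet> y) *\<^sub>R v" and u: "supported_on \<sigma> u" "u \<bullet> v = 0"
  shows "u \<bullet> ((M + destabilizer \<eta> \<kappa> u \<sigma>) *v y) = \<eta> * ((norm u)^2 - \<kappa>) * (u \<bullet> y)"
proof -
  have "u \<bullet> restrict_to \<sigma> y = u \<bullet> y"
    unfolding inner_sum using u(1) by (intro sum.cong) (auto simp: restrict_to_def supported_on_def)
  then show ?thesis using u(2)
    by (simp add: matrix_vector_mult_add_rdistrib Mv destabilizer_mult inner_add_right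
        inner_diff_right power2_norm_eq_inner algebra_simps)
qed

text \<open>On vectors supported on a proper subset \<rho> of \<sigma>, the term u u^T loses at least
  m \<le> min_{i \<in> \<sigma>} u_i^2, so the perturbed matrix is negative definite there as soon as
  \<kappa> > |u|^2 - m.\<close>
lemma destabilizer_neg_def_on_proper_subset:
  fixes M :: "real^'n^'n"
  assumes Mv: "\<And>y. M *v y = - (v \<bullet> y) *\<^sub>R v" and \<rho>: "\<rho> \<subset> \<sigma>"
    and m: "\<And>i. i \<in> \<sigma> \<Longrightarrow> m \<le> (u$i)^2" and \<eta>: "\<eta> \<ge> 0"
  shows "neg_def_on (M + destabilizer \<eta> \<kappa> u \<sigma>) \<rho> (\<eta> * (\<kappa> - ((norm u)^2 - m)))"
  unfolding neg_def_on_def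
proof (intro allI impI)
  fix y assume y: "supported_on \<rho> y"
  obtain i0 where i0: "i0 \<in> \<sigma>" "i0 \<notin> \<rho>" using psubset_imp_ex_mem[OF \<rho>] by blast
  have "supported_on \<sigma> y" using y \<rho> by (auto simp: supported_on_def)
  then have "y \<bullet> restrict_to \<sigma> y = (norm y)^2"
    by (simp add: supported_on_restrict_to power2_norm_eq_inner)
  then have "y \<bullet> ((M + destabilizer \<eta> \<kappa> u \<sigma>) *v y) = - ((v \<bullet> y)^2) + \<eta> * ((u \<bullet> y)^2 - \<kappa> * (norm y)^2)"
    by (simp add: Mv destabilizer_mult power2_eq_square inner_commute algebra_simps)
  also have "\<dots> \<le> 0 + \<eta> * (((norm u)^2 - m) * (norm y)^2 - \<kappa> * (norm y)^2)"
  proof -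
    have "(u \<bullet> y)^2 \<le> ((norm u)^2 - (u$i0)^2) * (norm y)^2"
      by (rule inner_sq_le_without_coordinate[OF y i0(2)])
    also have "\<dots> \<le> ((norm u)^2 - m) * (norm y)^2" using m[OF i0(1)] by (intro mult_right_mono) auto
    finally show ?thesis using \<eta> by (intro add_mono mult_left_mono) auto
  qed
  also have "\<dots> = - (\<eta> * (\<kappa> - ((norm u)^2 - m))) * (norm y)^2" by (simp add: algebra_simps)
  finally show "y \<bullet> ((M + destabilizer \<eta> \<kappa> u \<sigma>) *v y) \<le> - (\<eta> * (\<kappa> - ((norm u)^2 - m))) * (norm y)^2" .
qed

text \<open>Unstable half of flexibility: with u \<perp> v of full support on \<sigma>, m = min_{i \<in> \<sigma>} u_i^2 and
  \<kappa> = |u|^2 - m/2, the perturbation \<eta> (u u^T - \<kappa> P_\<sigma>) of size e makes u a left eigenvector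
  with eigenvalue \<eta> m / 2 > 0, so \<sigma> is unstable, while every proper subset becomes negative
  definite with the same constant, hence stable.\<close>
lemma minimally_unstable_perturbation:
  fixes J D :: "real^'n^'n"
  assumes D: "pos_diagonal D" and v: "\<And>i. v$i \<noteq> 0" and Mv: "\<And>y. (J - D) *v y = - (v \<bullet> y) *\<^sub>R v"
    and two: "card \<sigma> \<ge> 2" and e: "e > 0"
  shows "\<exists>A. perturbation e A \<and> minimally_unstable (J + A) D \<sigma>"
proof -
  have ne: "\<sigma> \<noteq> {}" using two by auto
  obtain u where u: "supported_on \<sigma> u" "\<And>i. i \<in> \<sigma> \<Longrightarrow> u$i \<noteq> 0" "u \<bullet> v = 0"
    using orthogonal_full_support_vector[OF v two] by blast
  define N where "N = (norm u)^2"
  define m where "m = Min ((\<lambda>i. (u$i)^2) ` \<sigma>)"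
  have m: "m > 0" using u(2) ne by (auto simp: m_def)
  have m_le: "m \<le> (u$i)^2" if "i \<in> \<sigma>" for i using that by (auto simp: m_def)
  have "(u$i)^2 \<le> N" for i
    unfolding N_def using component_le_norm_cart[of u i] by (metis abs_le_square_iff abs_norm_cancel)
  then have mN: "m \<le> N" using ne m_le by (meson ex_in_conv order_trans)
  define \<eta> where "\<eta> = e / (2 * N)"
  define lam where "lam = \<eta> * (m / 2)"
  define A where "A = destabilizer \<eta> (N - m / 2) u \<sigma>"
  have \<eta>: "\<eta> > 0" using e m mN by (simp add: \<eta>_def)
  have lam: "lam > 0" using \<eta> m by (simp add: lam_def)
  have "perturbation (2 * \<eta> * N) A"
    unfolding A_def N_def using destabilizer_perturbation[of \<eta> "N - m / 2" u] \<eta> m mN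
    by (simp add: N_def)
  then have A: "perturbation e A" using m mN by (simp add: \<eta>_def)
  have shift: "J + A - D = (J - D) + A" by (simp add: algebra_simps)
  have "u \<noteq> 0" using u(2) ne by (auto simp: vec_eq_iff)
  moreover have "u \<bullet> ((J + A - D) *v y) = lam * (u \<bullet> y)" for y
  proof -
    have "u \<bullet> ((J + A - D) *v y) = \<eta> * ((norm u)^2 - (N - m / 2)) * (u \<bullet> y)"
      unfolding shift unfolding A_def by (rule destabilizer_left_eigenvector[OF Mv u(1,3)])
    then show ?thesis by (simp add: lam_def N_def)
  qed
  ultimately have "\<not> lyapunov_stable (J + A) D b xs" if "supp xs = \<sigma>" for b xs
    using left_eigenvector_not_lyapunov_stable[OF D _ u(1) _ lam that] by blast
  then have "unstable_set (J + A) D \<sigma>" by (rule unstable_setI[OF ne])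
  moreover have "\<not> unstable_set (J + A) D \<rho>" if sub: "\<rho> \<subset> \<sigma>" for \<rho>
  proof (cases "\<rho> = {}")
    case False
    have "neg_def_on (J + A - D) \<rho> (\<eta> * ((N - m / 2) - ((norm u)^2 - m)))"
      unfolding shift unfolding A_def using \<eta> by (intro destabilizer_neg_def_on_proper_subset[OF Mv sub m_le]) auto
    then have "neg_def_on (J + A - D) \<rho> lam" by (simp add: lam_def N_def)
    then have "stable_set (J + A) D \<rho>" by (rule stable_set_of_neg_def[OF D False lam])
    then show ?thesis by (simp add: unstable_set_def)
  qed (simp add: unstable_set_def)
  ultimately show ?thesis using A unfolding minimally_unstable_def by blast
qed

lemma neg_def_on_singleton:
  fixes M :: "real^'n^'n"
  assumes "M$i$i \<le> - \<mu>"
  shows "neg_def_on M {i} \<mu>"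
  unfolding neg_def_on_def
proof (intro allI impI)
  fix y :: "real^'n" assume y: "supported_on {i} y"
  have "(\<Sum>j\<in>UNIV. M$i$j * y$j) = (\<Sum>j\<in>UNIV. if j = i then M$i$i * y$i else 0)"
    by (rule sum.cong) (use y in \<open>auto simp: supported_on_def\<close>)
  then have row: "(M *v y)$i = M$i$i * y$i" by (simp add: matrix_vector_mult_def)
  have "y \<bullet> (M *v y) = (\<Sum>k\<in>UNIV. if k = i then M$i$i * (y$i)^2 else 0)"
    unfolding inner_sum by (rule sum.cong) (use y row in \<open>auto simp: supported_on_def power2_eq_square\<close>)
  moreover have "(norm y)^2 = (y$i)^2"
    unfolding norm_sq_sum using y by (subst sum.mono_neutral_right[of UNIV "{i}"]) (auto simp: supported_on_def)
  ultimately show "y \<bullet> (M *v y) \<le> - \<mu> * (norm y)^2"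
    using mult_right_mono[OF assms, of "(y$i)^2"] by simp
qed

text \<open>In any network, flexible cliques have at least two neurons: a single neuron has
  negative self-coupling, which survives every small perturbation and keeps it stable.\<close>
lemma flexible_clique_card:
  fixes J D :: "real^'n^'n"
  assumes net: "tln_network J D" and flex: "flexible_clique J D \<sigma>"
  shows "2 \<le> card \<sigma>"
proof -
  have D: "pos_diagonal D" and neg: "\<And>i. (J - D)$i$i < 0" using net by (auto simp: tln_network_iff)
  have "\<sigma> \<noteq> {}"
    using flex zero_less_one unfolding flexible_clique_def maximally_stable_def stable_set_def by blast
  moreover have "\<sigma> \<noteq> {i}" for i
  proof
    assume si: "\<sigma> = {i}"
    define e where "e = - (J - D)$i$i / 2"
    have e: "e > 0" using neg[of i] by (simp add: e_def)
    obtain A where A: "perturbation e A" and mu: "minimally_unstable (J + A) D \<sigma>"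
      using flex e unfolding flexible_clique_def by blast
    have "A$i$i \<le> e" using A abs_le_D1[of "A$i$i" e] unfolding perturbation_def by blast
    moreover have "(J + A - D)$i$i = (J - D)$i$i + A$i$i" by simp
    ultimately have "(J + A - D)$i$i \<le> - e" unfolding e_def by linarith
    then have "stable_set (J + A) D \<sigma>"
      unfolding si by (intro stable_set_of_neg_def[OF D _ e] neg_def_on_singleton) auto
    then show False using mu unfolding minimally_unstable_def unstable_set_def by blast
  qed
  ultimately show ?thesis
    by (metis One_nat_def card_1_singletonE card_0_eq finite less_2_cases not_le)
qed

lemma card_subsets_at_least_two:
  "card {\<sigma>::'n::finite set. 2 \<le> card \<sigma>} = 2 ^ CARD('n) - CARD('n) - 1"
proof -
  define small where "small = insert {} (range (\<lambda>i::'n. {i}))"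
  have split: "(UNIV :: 'n set set) = {\<sigma>. 2 \<le> card \<sigma>} \<union> small"
    by (auto simp: small_def not_le less_2_cases_iff card_1_singleton_iff)
  have disjoint: "{\<sigma>::'n set. 2 \<le> card \<sigma>} \<inter> small = {}" by (auto simp: small_def)
  have "card small = CARD('n) + 1"
    unfolding small_def by (subst card_insert_disjoint) (auto simp: card_image inj_on_def)
  moreover have "card (UNIV :: 'n set set) = 2 ^ CARD('n)"
    using card_Pow[of "UNIV :: 'n set"] by simp
  ultimately show ?thesis
    using card_Un_disjoint[OF finite finite disjoint] split by simp
qed

lemma flexibility_upper_bound:
  fixes J D :: "real^'n^'n"
  assumes "tln_network J D"
  shows "flexibility J D \<le> 2 ^ CARD('n) - CARD('n) - 1"
  unfolding flexibility_def card_subsets_at_least_two[symmetric]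
  by (rule card_mono) (auto intro: flexible_clique_card[OF assms])

lemma rank_one_flexible_clique:
  fixes J D :: "real^'n^'n"
  assumes D: "pos_diagonal D" and v: "\<And>i. v$i \<noteq> 0" and Mv: "\<And>y. (J - D) *v y = - (v \<bullet> y) *\<^sub>R v"
    and two: "2 \<le> card \<sigma>"
  shows "flexible_clique J D \<sigma>"
  unfolding flexible_clique_def
proof (intro allI impI)
  fix e :: real assume e: "e > 0"
  obtain i1 where i1: "i1 \<in> \<sigma>" using two by fastforce
  show "\<exists>As Au. perturbation e As \<and> perturbation e Au \<and>
      maximally_stable (J + As) D \<sigma> \<and> minimally_unstable (J + Au) D \<sigma>"
    using maximally_stable_perturbation[OF D v Mv i1 e] diagonal_damping_perturbation[of e]
      minimally_unstable_perturbation[OF D v Mv two e] e by auto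
qed

theorem mainTheorem17:
  fixes J D :: "real^'n^'n"
  assumes "tln_network J D"
    and "transpose (J - D) = J - D"
    and "rank (J - D) = 1"
  shows "maximally_flexible J D \<and> flexibility J D = 2 ^ CARD('n) - CARD('n) - 1"
proof -
  have D: "pos_diagonal D" and neg: "\<And>i. (J - D)$i$i < 0"
    using assms(1) by (auto simp: tln_network_iff)
  obtain v where v: "\<And>i. v$i \<noteq> 0" and Mv: "\<And>y. (J - D) *v y = - (v \<bullet> y) *\<^sub>R v"
    using symmetric_rank_one_neg_diagonal[OF assms(2,3) neg] by blast
  have "{\<sigma>. flexible_clique J D \<sigma>} = {\<sigma>. 2 \<le> card \<sigma>}"
    using flexible_clique_card[OF assms(1)] rank_one_flexible_clique[OF D v Mv] by blast
  then have flex: "flexibility J D = 2 ^ CARD('n) - CARD('n) - 1"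
    unfolding flexibility_def by (simp add: card_subsets_at_least_two)
  define achievable where "achievable = {flexibility J' D' | (J' :: real^'n^'n) D'. tln_network J' D'}"
  have "Max achievable = flexibility J D"
  proof (rule Max_eqI)
    show "finite achievable"
      by (rule finite_subset[of _ "{..2 ^ CARD('n) - CARD('n) - 1}"])
        (auto simp: achievable_def dest!: flexibility_upper_bound)
    show "y \<le> flexibility J D" if "y \<in> achievable" for y
      using that flex flexibility_upper_bound by (auto simp: achievable_def)
    show "flexibility J D \<in> achievable" using assms(1) by (auto simp: achievable_def)
  qed
  then show ?thesis using assms(1) flex unfolding maximally_flexible_def achievable_def by simp
qed

end
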